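(* If $r\ge1$ and $n_1,\ldots,n_r\ge0$ are integers with $n_1>0$ (i.e. $-n_1<0$), then \[ \zeta(-n_1,\ldots,-n_r|1)=\zeta(-n_1,\ldots,-n_r|0). \]
   Context: Normalized multiple Bernoulli polynomials: for integers $k\ge0$, $\zeta(-k|z)=-\frac{B_{k+1}(z)}{k+1}$ ($B_n(z)$ the Bernoulli polynomials, $B_n=B_n(0)$), and for $r\ge2$, $k_j\ge0$, $\zeta(-k_1,\ldots,-k_r|z)=-\frac{1}{k_r+1}\zeta(-k_1,\ldots,-k_{r-2},-k_{r-1}-k_r-1|z)-\frac12\zeta(-k_1,\ldots,-k_{r-2},-k_{r-1}-k_r|z)+\sum_{q=1}^{k_r}(-k_r)_q\frac{B_{q+1}}{(q+1)!}\zeta(-k_1,\ldots,-k_{r-2},-k_{r-1}-k_r+q|z)$, with $(a)_q=a(a+1)\cdots(a+q-1)$ (for $r=2$ the prefix is empty). *)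

theory Defs
  imports Complex_Main
begin

text \<open>Bernoulli numbers with B_1 = -1/2 (so that B_n = B_n(0)):
  B_0 = 1 and sum_{k=0}^{n} binom(n+1,k) B_k = 0 for n >= 1.\<close>
function bernoulli :: "nat \<Rightarrow> real" where
  "bernoulli n = (if n = 0 then 1
     else - (\<Sum>k<n. real ((n + 1) choose k) * bernoulli k) / real (n + 1))"
  by auto
termination by (relation "measure id") auto

definition bernpoly :: "nat \<Rightarrow> real \<Rightarrow> real" where
  "bernpoly n z = (\<Sum>k\<le>n. real (n choose k) * bernoulli k * z ^ (n - k))"

text \<open>Auxiliary: the multiple Bernoulli polynomial indexed by the REVERSED list
  [k_r, k_(r-1), ..., k_1] (list entries k_j correspond to arguments -k_j).\<close>
fun zeta_rev :: "nat list \<Rightarrow> real \<Rightarrow> real" where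
  "zeta_rev [] z = 0"
| "zeta_rev [k] z = - bernpoly (k + 1) z / real (k + 1)"
| "zeta_rev (kr # kr1 # rest) z =
     - (1 / real (kr + 1)) * zeta_rev ((kr1 + kr + 1) # rest) z
     - (1 / 2) * zeta_rev ((kr1 + kr) # rest) z
     + (\<Sum>q=1..kr. pochhammer (- real kr) q * bernoulli (q + 1) / fact (q + 1)
          * zeta_rev ((kr1 + kr - q) # rest) z)"

text \<open>mzeta [k_1,...,k_r] z = zeta(-k_1,...,-k_r | z).\<close>
definition mzeta :: "nat list \<Rightarrow> real \<Rightarrow> real" where
  "mzeta ks z = zeta_rev (rev ks) z"

end

theory Submission
  imports Defs
begin

text \<open>The only input is that B_n(1) = B_n(0) for n \<noteq> 1. The recursion for zeta_rev never
  changes the innermost argument k_1 and replaces the list head only by entries that are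
  at least the second entry, so the innermost argument stays positive in every
  recursive call; induction along the recursion therefore reduces the claim to the
  one-variable case zeta(-k|z) = -B_(k+1)(z)/(k+1) with k + 1 \<ge> 2.\<close>

lemma bernoulli_binomial_sum_eq_0:
  assumes "n \<ge> 2"
  shows "(\<Sum>k<n. real (n choose k) * bernoulli k) = 0"
proof -
  obtain m where m: "n = Suc m" "m \<ge> 1"
    using assms by (cases n) auto
  have rec: "bernoulli m = - (\<Sum>k<m. real (Suc m choose k) * bernoulli k) / real (Suc m)"
    using m by (subst bernoulli.simps) simp
  have "(\<Sum>k<n. real (n choose k) * bernoulli k)
      = (\<Sum>k<m. real (Suc m choose k) * bernoulli k) + real (Suc m) * bernoulli m"
    using m by simp
  also have "\<dots> = 0"
    using rec by (simp add: field_simps)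
  finally show ?thesis .
qed

lemma bernpoly_at_0: "bernpoly n 0 = bernoulli n"
  unfolding bernpoly_def by (simp add: lessThan_Suc_atMost[symmetric] power_0_left)

lemma bernpoly_at_1: "bernpoly n 1 = (\<Sum>k<n. real (n choose k) * bernoulli k) + bernoulli n"
  unfolding bernpoly_def by (simp add: lessThan_Suc_atMost[symmetric])

lemma bernpoly_1_eq_bernpoly_0:
  assumes "n \<noteq> 1"
  shows "bernpoly n 1 = bernpoly n 0"
proof (cases "n = 0")
  case True
  then show ?thesis by (simp add: bernpoly_def)
next
  case False
  with assms have "n \<ge> 2" by simp
  then show ?thesis
    by (simp add: bernpoly_at_0 bernpoly_at_1 bernoulli_binomial_sum_eq_0 del: bernoulli.simps)
qed

lemma zeta_rev_1_eq_zeta_rev_0: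
  assumes "xs \<noteq> []" and "last xs > 0"
  shows "zeta_rev xs 1 = zeta_rev xs 0"
  using assms
proof (induction xs "1::real" rule: zeta_rev.induct)
  case 1
  then show ?case by simp
next
  case (2 k)
  then show ?case
    using bernpoly_1_eq_bernpoly_0[of "k + 1"] by simp
next
  case (3 kr kr1 rest)
  have last_pos: "last (a # rest) > 0" if "a \<ge> kr1" for a
    using "3.prems" that by (cases rest) auto
  have outer: "zeta_rev ((kr1 + kr + 1) # rest) 1 = zeta_rev ((kr1 + kr + 1) # rest) 0"
    by (rule "3.hyps"(1)) (simp, rule last_pos, simp)
  have middle: "zeta_rev ((kr1 + kr) # rest) 1 = zeta_rev ((kr1 + kr) # rest) 0"
    by (rule "3.hyps"(2)) (simp, rule last_pos, simp)
  have inner: "zeta_rev ((kr1 + kr - q) # rest) 1 = zeta_rev ((kr1 + kr - q) # rest) 0"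
    if "q \<in> {1..kr}" for q
    by (rule "3.hyps"(3)) (fact that, simp, rule last_pos, use that in auto)
  show ?case
    by (simp only: zeta_rev.simps outer middle inner cong: sum.cong)
qed

theorem mainTheorem10:
  fixes ns :: "nat list"
  assumes "length ns \<ge> 1" and "hd ns > 0"
  shows "mzeta ns 1 = mzeta ns 0"
proof -
  have "rev ns \<noteq> []" and "last (rev ns) > 0"
    using assms by (auto simp: last_rev)
  then show ?thesis
    unfolding mzeta_def by (rule zeta_rev_1_eq_zeta_rev_0)
qed

end
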